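(* Let $p$ be an odd prime, let $\nu>0$ and $r\geq0$ be integers, let $n'$ be an odd positive integer with $p\nmid n'$, and let $l$ be a positive integer. If there exists a Euclidean self-dual negacyclic code of length $2^\nu p^r n'$ over $\mathbb{F}_{p^l}$, then there exists a Euclidean self-dual negacyclic code of length $2^\mu p^r n'$ over $\mathbb{F}_{p^l}$ for every integer $\mu\geq\nu$.
   Context: A linear code of length $n$ over $\mathbb{F}_q$ is a subspace of $\mathbb{F}_q^n$; it is negacyclic if $(-c_{n-1},c_0,\dots,c_{n-2})\in C$ whenever $(c_0,\dots,c_{n-1})\in C$. The Euclidean dual is $C^{\perp_E}=\{v : \sum_i v_ic_i=0\ \forall c\in C\}$, and $C$ is Euclidean self-dual if $C=C^{\perp_E}$. *)

theory Defs
  imports "HOL-Computational_Algebra.Primes"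
begin

definition words :: "nat \<Rightarrow> (nat \<Rightarrow> 'a::field) set" where
  "words n = {v. \<forall>i\<ge>n. v i = 0}"

definition linear_code :: "nat \<Rightarrow> (nat \<Rightarrow> 'a::field) set \<Rightarrow> bool" where
  "linear_code n C \<longleftrightarrow> C \<subseteq> words n \<and> (\<lambda>_. 0) \<in> C \<and>
     (\<forall>x\<in>C. \<forall>y\<in>C. (\<lambda>i. x i + y i) \<in> C) \<and>
     (\<forall>a. \<forall>x\<in>C. (\<lambda>i. a * x i) \<in> C)"

definition nega_shift :: "nat \<Rightarrow> (nat \<Rightarrow> 'a::field) \<Rightarrow> (nat \<Rightarrow> 'a)" where
  "nega_shift n c = (\<lambda>i. if i = 0 then - c (n - 1) else if i < n then c (i - 1) else 0)"

definition negacyclic_code :: "nat \<Rightarrow> (nat \<Rightarrow> 'a::field) set \<Rightarrow> bool" where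
  "negacyclic_code n C \<longleftrightarrow> linear_code n C \<and> (\<forall>c\<in>C. nega_shift n c \<in> C)"

definition euclid_dual :: "nat \<Rightarrow> (nat \<Rightarrow> 'a::field) set \<Rightarrow> (nat \<Rightarrow> 'a) set" where
  "euclid_dual n C = {v \<in> words n. \<forall>c\<in>C. (\<Sum>i<n. v i * c i) = 0}"

definition euclid_self_dual :: "nat \<Rightarrow> (nat \<Rightarrow> 'a::field) set \<Rightarrow> bool" where
  "euclid_self_dual n C \<longleftrightarrow> C = euclid_dual n C"

end

theory Submission
  imports Defs
begin

text \<open>If \<open>C\<close> is a self-dual negacyclic code of length \<open>n\<close>, the words of length \<open>2n\<close> whose
  even-indexed and odd-indexed subwords both lie in \<open>C\<close> form a self-dual negacyclic code of
  length \<open>2n\<close>: the negacyclic shift of length \<open>2n\<close> sends the pair of subwords \<open>(x, y)\<close> to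
  \<open>(nega_shift n y, x)\<close>, and the inner product of length \<open>2n\<close> is the sum of the inner products
  of the two pairs of subwords. Iterating the doubling gives every \<open>\<mu> \<ge> \<nu>\<close>; the arithmetic
  hypotheses on \<open>p\<close>, \<open>r\<close>, \<open>n'\<close> and the field size only serve to make the length positive.\<close>

definition even_coords :: "(nat \<Rightarrow> 'a) \<Rightarrow> nat \<Rightarrow> 'a" where
  "even_coords v = (\<lambda>i. v (2 * i))"

definition odd_coords :: "(nat \<Rightarrow> 'a) \<Rightarrow> nat \<Rightarrow> 'a" where
  "odd_coords v = (\<lambda>i. v (2 * i + 1))"

definition interleave_words :: "(nat \<Rightarrow> 'a) \<Rightarrow> (nat \<Rightarrow> 'a) \<Rightarrow> nat \<Rightarrow> 'a" where
  "interleave_words x y = (\<lambda>j. if even j then x (j div 2) else y (j div 2))"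

definition interleave_code :: "nat \<Rightarrow> (nat \<Rightarrow> 'a::field) set \<Rightarrow> (nat \<Rightarrow> 'a) set" where
  "interleave_code n C = {v \<in> words (2 * n). even_coords v \<in> C \<and> odd_coords v \<in> C}"

lemma even_coords_interleave_words [simp]: "even_coords (interleave_words x y) = x"
  and odd_coords_interleave_words [simp]: "odd_coords (interleave_words x y) = y"
  by (auto simp: even_coords_def odd_coords_def interleave_words_def)

lemma interleave_words_in_words:
  assumes "x \<in> words n" and "y \<in> words n"
  shows "interleave_words x y \<in> words (2 * n)"
proof -
  have "n \<le> i div 2" if "2 * n \<le> i" for i :: nat
    using that by linarith
  then show ?thesis
    using assms by (auto simp: words_def interleave_words_def)
qed

lemma coords_in_words:
  assumes "v \<in> words (2 * n)"
  shows "even_coords v \<in> words n" and "odd_coords v \<in> words n"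
  using assms by (auto simp: words_def even_coords_def odd_coords_def)

lemma sum_lessThan_double:
  fixes f :: "nat \<Rightarrow> 'b::comm_monoid_add"
  shows "(\<Sum>i<2 * n. f i) = (\<Sum>i<n. f (2 * i)) + (\<Sum>i<n. f (2 * i + 1))"
  by (induct n) (auto simp: ac_simps)

lemma inner_product_split:
  fixes v c :: "nat \<Rightarrow> 'a::field"
  shows "(\<Sum>i<2 * n. v i * c i) =
    (\<Sum>i<n. even_coords v i * even_coords c i) + (\<Sum>i<n. odd_coords v i * odd_coords c i)"
  by (simp add: sum_lessThan_double even_coords_def odd_coords_def)

lemma nega_shift_double_coords:
  fixes v :: "nat \<Rightarrow> 'a::field"
  assumes "n > 0" and "v \<in> words (2 * n)"
  shows "even_coords (nega_shift (2 * n) v) = nega_shift n (odd_coords v)"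
    and "odd_coords (nega_shift (2 * n) v) = even_coords v"
proof -
  have "2 * (n - 1) + 1 = 2 * n - 1"
    using assms(1) by simp
  then show "even_coords (nega_shift (2 * n) v) = nega_shift n (odd_coords v)"
    using assms(1)
    by (auto simp: fun_eq_iff even_coords_def odd_coords_def nega_shift_def gr0_conv_Suc)
  show "odd_coords (nega_shift (2 * n) v) = even_coords v"
    using assms(2)
    by (auto simp: fun_eq_iff even_coords_def odd_coords_def nega_shift_def words_def)
qed

lemma linear_code_interleave:
  assumes "linear_code n C"
  shows "linear_code (2 * n) (interleave_code n C)"
  using assms
  by (auto simp: linear_code_def interleave_code_def words_def even_coords_def odd_coords_def)

lemma negacyclic_code_interleave:
  assumes "n > 0" and "negacyclic_code n C"
  shows "negacyclic_code (2 * n) (interleave_code n C)"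
proof -
  have "nega_shift (2 * n) v \<in> interleave_code n C" if "v \<in> interleave_code n C" for v
  proof -
    have "nega_shift (2 * n) v \<in> words (2 * n)"
      using assms(1) by (auto simp: nega_shift_def words_def)
    then show ?thesis
      using that assms nega_shift_double_coords[of n v]
      by (auto simp: interleave_code_def negacyclic_code_def)
  qed
  then show ?thesis
    using assms(2) linear_code_interleave by (auto simp: negacyclic_code_def)
qed

lemma euclid_dual_interleave:
  assumes "linear_code n C"
  shows "euclid_dual (2 * n) (interleave_code n C) = interleave_code n (euclid_dual n C)"
proof
  have C_words: "C \<subseteq> words n" and zero_in_C: "(\<lambda>_. 0) \<in> C"
    using assms by (auto simp: linear_code_def)
  show "euclid_dual (2 * n) (interleave_code n C) \<subseteq> interleave_code n (euclid_dual n C)"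
  proof
    fix v assume v: "v \<in> euclid_dual (2 * n) (interleave_code n C)"
    then have v_words: "v \<in> words (2 * n)"
      by (simp add: euclid_dual_def)
    have zero_words: "(\<lambda>_. 0) \<in> words n"
      by (simp add: words_def)
    have "interleave_words c (\<lambda>_. 0) \<in> interleave_code n C"
      and "interleave_words (\<lambda>_. 0) c \<in> interleave_code n C" if "c \<in> C" for c
      using that C_words zero_in_C zero_words interleave_words_in_words[of _ n]
      by (auto simp: interleave_code_def)
    moreover have "\<And>u. u \<in> interleave_code n C \<Longrightarrow> (\<Sum>i<2 * n. v i * u i) = 0"
      using v by (simp add: euclid_dual_def)
    ultimately have "(\<Sum>i<n. even_coords v i * c i) = 0" and "(\<Sum>i<n. odd_coords v i * c i) = 0"
      if "c \<in> C" for c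
      using that by (fastforce simp: inner_product_split)+
    then show "v \<in> interleave_code n (euclid_dual n C)"
      using v_words coords_in_words[OF v_words] by (auto simp: interleave_code_def euclid_dual_def)
  qed
next
  show "interleave_code n (euclid_dual n C) \<subseteq> euclid_dual (2 * n) (interleave_code n C)"
    by (auto simp: interleave_code_def euclid_dual_def inner_product_split)
qed

lemma self_dual_negacyclic_double:
  fixes C :: "(nat \<Rightarrow> 'a::field) set"
  assumes "n > 0" and "negacyclic_code n C" and "euclid_self_dual n C"
  shows "negacyclic_code (2 * n) (interleave_code n C)"
    and "euclid_self_dual (2 * n) (interleave_code n C)"
proof -
  show "negacyclic_code (2 * n) (interleave_code n C)"
    using assms(1,2) by (rule negacyclic_code_interleave)
  have "linear_code n C"
    using assms(2) by (simp add: negacyclic_code_def)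
  then show "euclid_self_dual (2 * n) (interleave_code n C)"
    using assms(3) euclid_dual_interleave by (metis euclid_self_dual_def)
qed

theorem corollary3p4:
  fixes p \<nu> r n' l :: nat
  assumes "prime p" and "odd p" and "\<nu> > 0" and "odd n'" and "n' > 0"
    and "\<not> p dvd n'" and "l > 0"
    and "card (UNIV :: ('a::{finite,field}) set) = p ^ l"
    and "\<exists>C :: (nat \<Rightarrow> 'a) set. negacyclic_code (2^\<nu> * p^r * n') C
            \<and> euclid_self_dual (2^\<nu> * p^r * n') C"
  shows "\<forall>\<mu>\<ge>\<nu>. \<exists>C :: (nat \<Rightarrow> 'a) set. negacyclic_code (2^\<mu> * p^r * n') C
            \<and> euclid_self_dual (2^\<mu> * p^r * n') C"
proof (intro allI impI)
  fix \<mu> assume "\<nu> \<le> \<mu>"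
  then show "\<exists>C :: (nat \<Rightarrow> 'a) set. negacyclic_code (2^\<mu> * p^r * n') C
            \<and> euclid_self_dual (2^\<mu> * p^r * n') C"
  proof (induct rule: dec_induct)
    case base
    show ?case using assms(9) .
  next
    case (step m)
    then obtain C :: "(nat \<Rightarrow> 'a) set" where
      "negacyclic_code (2^m * p^r * n') C" and "euclid_self_dual (2^m * p^r * n') C"
      by blast
    moreover have "2^m * p^r * n' > 0"
      using assms(1,5) prime_gt_0_nat by auto
    ultimately show ?case
      using self_dual_negacyclic_double[of "2^m * p^r * n'" C] by (auto simp: mult.assoc)
  qed
qed

end
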